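(* If $K$ is upward directed, then for every $a\in K$ and every loop $\bar p$ based at $a$, the cycle $\chi_{\bar p}$ is an orthogonal projection of the form $Q\otimes I$ on $H_a\otimes l^2(S_a)$ (zero on the other summands of $\mathcal H$), where $Q$ is the orthogonal projection of $H_a$ onto the domain $H_{\bar p}$.
   Context: $K$ is a partially ordered set; it is upward directed if any two elements have a common upper bound. Elementary paths on $K$: for $b\le a$ the formal symbol $(b,a)$ and for $b\ge a$ the formal symbol $\overline{(b,a)}$; both have starting point $\partial_1=a$ and ending point $\partial_0=b$; $(a,a)=\overline{(a,a)}=:i_a$ is the trivial path. $\overline S$ is the set of finite sequences $\bar p=s_n*\cdots*s_1$ of elementary paths with $\partial_0 s_{i-1}=\partial_1 s_i$; $\partial_1\bar p=\partial_1 s_1$, $\partial_0\bar p=\partial_0 s_n$, and the concatenation $\bar p*\bar q$ is defined when $\partial_1\bar p=\partial_0\bar q$. The equivalence $\sim$ on $\overline S$ is the smallest equivalence relation compatible with concatenation such that for all $a\le b\le c$: $(a,b)*(b,c)\sim(a,c)$, $\overline{(c,b)}*\overline{(b,a)}\sim\overline{(c,a)}$, $(a,b)*\overline{(b,a)}\sim i_a$, $\overline{(b,a)}*(a,b)\sim i_b$. Equivalence classes $p=[\bar p]$ are called paths. $S_a$ denotes the set of paths $p$ with $\partial_0p=a$. A loop based at $a$ is $\bar p\in\overline S$ with $\partial_0\bar p=\partial_1\bar p=a$. For each $a\in K$, $H_a$ is a Hilbert space with orthonormal basis $\{e^a_n\}_{n\ge1}$; for $a\le b$, $\gamma_{ba}:H_a\to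 H_b$ is an isometry mapping each basis vector $e^a_n$ to a basis vector of $\{e^b_m\}$, with $\gamma_{aa}=\mathrm{id}$ and $\gamma_{ca}=\gamma_{cb}\gamma_{ba}$ for $a\le b\le c$. $l^2(S_a)$ is the Hilbert space with orthonormal basis $\{e_p\}_{p\in S_a}$, and $\mathcal H=\bigoplus_{a\in K}H_a\otimes l^2(S_a)$. For $a\le b$, $\chi_a^b\in B(\mathcal H)$ vanishes on all summands other than $H_a\otimes l^2(S_a)$ and satisfies $\chi_a^b(h\otimes e_p)=\gamma_{ba}(h)\otimes e_{[\overline{(b,a)}*\bar p]}$ for $h\in H_a$, $p\in S_a$, $\bar p\in p$; $\chi_a^{b*}$ is its adjoint. For an elementary path put $\chi_{\overline{(b,a)}}=\chi_a^b$ ($a\le b$) and $\chi_{(b,a)}=\chi_b^{a*}$ ($b\le a$), and for $\bar p=s_n*\cdots*s_1\in\overline S$ put $\chi_{\bar p}=\chi_{s_n}\cdots\chi_{s_1}$. For a loop $\bar p$, $\chi_{\bar p}$ is called a cycle. The domain $H_{\bar p}$ of $\bar p$ is the closed subspace of $H_{\partial_1\bar p}$ consisting of the vectors $h$ with $\|\chi_{\bar p}(h\otimes e_s)\|=\|h\|$ for all $s\in S_{\partial_1\bar p}$. *)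

theory Defs
  imports "HOL-Analysis.Analysis"
begin

text \<open>Elementary paths.  \<open>Dn b a\<close> is the formal symbol (b,a) for b \<le> a,
  \<open>Up b a\<close> is the formal symbol overline(b,a) for b \<ge> a.\<close>

datatype 'k epath = Dn 'k 'k | Up 'k 'k

fun ep_valid :: "'k::order epath \<Rightarrow> bool" where
  "ep_valid (Dn b a) = (b \<le> a)"
| "ep_valid (Up b a) = (a \<le> b)"

fun ep_start :: "'k epath \<Rightarrow> 'k" where
  "ep_start (Dn b a) = a"
| "ep_start (Up b a) = a"

fun ep_end :: "'k epath \<Rightarrow> 'k" where
  "ep_end (Dn b a) = b"
| "ep_end (Up b a) = b"

text \<open>A sequence s_n * ... * s_1 is stored as the list [s_n, ..., s_1], so that
  concatenation p * q is list append p @ q.\<close>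

definition wf_seq :: "'k::order epath list \<Rightarrow> bool" where
  "wf_seq l \<longleftrightarrow> l \<noteq> [] \<and> (\<forall>s\<in>set l. ep_valid s) \<and>
     (\<forall>i. Suc i < length l \<longrightarrow> ep_start (l ! i) = ep_end (l ! Suc i))"

definition seq_end :: "'k epath list \<Rightarrow> 'k" where
  "seq_end l = ep_end (hd l)"

definition seq_start :: "'k epath list \<Rightarrow> 'k" where
  "seq_start l = ep_start (last l)"

text \<open>The equivalence \<open>\<sim>\<close>: smallest equivalence relation on well-formed sequences,
  compatible with concatenation, generated by the four relations; the last rule
  identifies the symbols (a,a) and overline(a,a) (both are the trivial path i_a,
  which we represent by \<open>[Dn a a]\<close>).\<close>

inductive peq :: "'k::order epath list \<Rightarrow> 'k epath list \<Rightarrow> bool" where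
  refl: "wf_seq p \<Longrightarrow> peq p p"
| sym: "peq p q \<Longrightarrow> peq q p"
| trans: "peq p q \<Longrightarrow> peq q r \<Longrightarrow> peq p r"
| cong: "peq p p' \<Longrightarrow> peq q q' \<Longrightarrow> wf_seq (p @ q) \<Longrightarrow> wf_seq (p' @ q')
           \<Longrightarrow> peq (p @ q) (p' @ q')"
| dd: "a \<le> b \<Longrightarrow> b \<le> c \<Longrightarrow> peq [Dn a b, Dn b c] [Dn a c]"
| uu: "a \<le> b \<Longrightarrow> b \<le> c \<Longrightarrow> peq [Up c b, Up b a] [Up c a]"
| du: "a \<le> b \<Longrightarrow> peq [Dn a b, Up b a] [Dn a a]"
| ud: "a \<le> b \<Longrightarrow> peq [Up b a, Dn a b] [Dn b b]"
| triv: "peq [Up a a] [Dn a a]"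

definition pclass :: "'k::order epath list \<Rightarrow> 'k epath list set" where
  "pclass p = {q. peq p q}"

definition paths_to :: "'k::order \<Rightarrow> 'k epath list set set" where
  "paths_to a = {pclass p | p. wf_seq p \<and> seq_end p = a}"

definition pext :: "'k::order epath \<Rightarrow> 'k epath list set \<Rightarrow> 'k epath list set" where
  "pext s P = {q. \<exists>p\<in>P. peq (s # p) q}"

definition is_loop :: "'k::order epath list \<Rightarrow> 'k \<Rightarrow> bool" where
  "is_loop p a \<longleftrightarrow> wf_seq p \<and> seq_end p = a \<and> seq_start p = a"

definition upward_directed :: "'k::order itself \<Rightarrow> bool" where
  "upward_directed _ \<longleftrightarrow> (\<forall>a b::'k. \<exists>c. a \<le> c \<and> b \<le> c)"

definition ell2 :: "'i set \<Rightarrow> ('i \<Rightarrow> complex) set" where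
  "ell2 I = {x. (\<forall>i. i \<notin> I \<longrightarrow> x i = 0) \<and> (\<lambda>i. (cmod (x i))\<^sup>2) summable_on UNIV}"

definition l2inner :: "('i \<Rightarrow> complex) \<Rightarrow> ('i \<Rightarrow> complex) \<Rightarrow> complex" where
  "l2inner x y = (\<Sum>\<^sub>\<infinity>i. cnj (x i) * y i)"

definition l2norm :: "('i \<Rightarrow> complex) \<Rightarrow> real" where
  "l2norm x = sqrt (\<Sum>\<^sub>\<infinity>i. (cmod (x i))\<^sup>2)"

definition lin_subspace :: "('i \<Rightarrow> complex) set \<Rightarrow> bool" where
  "lin_subspace V \<longleftrightarrow> (\<lambda>i. 0) \<in> V \<and> (\<forall>x\<in>V. \<forall>y\<in>V. (\<lambda>i. x i + y i) \<in> V)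
     \<and> (\<forall>c::complex. \<forall>x\<in>V. (\<lambda>i. c * x i) \<in> V)"

definition is_orth_proj :: "('i \<Rightarrow> complex) set \<Rightarrow> ('i \<Rightarrow> complex) set
      \<Rightarrow> (('i \<Rightarrow> complex) \<Rightarrow> ('i \<Rightarrow> complex)) \<Rightarrow> bool" where
  "is_orth_proj H V P \<longleftrightarrow> V \<subseteq> H \<and> lin_subspace V \<and>
     (\<forall>x\<in>H. P x \<in> V \<and> (\<forall>v\<in>V. l2inner v (\<lambda>i. x i - P x i) = 0))"

text \<open>Each H_a is l^2(nat) with its standard basis (e^a_n corresponds to the n-th unit
  vector, indices shifted to start at 0).  The isometry \<gamma>_{ba} (a \<le> b) maps basis
  vectors to basis vectors, hence is given by an injective index map \<open>f b a\<close>: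
  \<gamma>_{ba}(e^a_n) = e^b_{f b a n}.

  The big space \<H> = \<Oplus>_a H_a \<otimes> l^2(S_a) is l^2 of the index set
  {(a,n,P). P \<in> S_a}; the basis vector e^a_n \<otimes> e_P is the indicator of (a,n,P).\<close>

type_synonym 'k idx = "'k \<times> nat \<times> 'k epath list set"

definition Hidx :: "'k::order idx set" where
  "Hidx = {(c, n, P). P \<in> paths_to c}"

definition HH :: "('k::order idx \<Rightarrow> complex) set" where
  "HH = ell2 Hidx"

text \<open>\<chi>_a^b (a \<le> b): e^a_n \<otimes> e_P \<mapsto> e^b_{f b a n} \<otimes> e_{[overline(b,a) * P]}, zero on the
  other summands.  In coordinates: the value at (b,m,Q) is the coefficient at the
  (unique, if any) preimage (a,n,P).  The summation set has at most one element.\<close>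

definition chi_up :: "('k \<Rightarrow> 'k \<Rightarrow> nat \<Rightarrow> nat) \<Rightarrow> 'k::order \<Rightarrow> 'k
      \<Rightarrow> ('k idx \<Rightarrow> complex) \<Rightarrow> ('k idx \<Rightarrow> complex)" where
  "chi_up f b a x = (\<lambda>(c, m, Q). if c = b then
      (\<Sum>(n, P)\<in>{(n, P). P \<in> paths_to a \<and> f b a n = m \<and> pext (Up b a) P = Q}. x (a, n, P))
    else 0)"

definition chi_up_adj :: "('k \<Rightarrow> 'k \<Rightarrow> nat \<Rightarrow> nat) \<Rightarrow> 'k::order \<Rightarrow> 'k
      \<Rightarrow> ('k idx \<Rightarrow> complex) \<Rightarrow> ('k idx \<Rightarrow> complex)" where
  "chi_up_adj f b a x = (\<lambda>(c, n, P). if c = a \<and> P \<in> paths_to a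
      then x (b, f b a n, pext (Up b a) P) else 0)"

fun chi_elem :: "('k \<Rightarrow> 'k \<Rightarrow> nat \<Rightarrow> nat) \<Rightarrow> 'k::order epath
      \<Rightarrow> ('k idx \<Rightarrow> complex) \<Rightarrow> ('k idx \<Rightarrow> complex)" where
  "chi_elem f (Up b a) = chi_up f b a"
| "chi_elem f (Dn b a) = chi_up_adj f a b"

definition chi_seq :: "('k \<Rightarrow> 'k \<Rightarrow> nat \<Rightarrow> nat) \<Rightarrow> 'k::order epath list
      \<Rightarrow> ('k idx \<Rightarrow> complex) \<Rightarrow> ('k idx \<Rightarrow> complex)" where
  "chi_seq f l = foldr (\<lambda>s g. chi_elem f s \<circ> g) l id"

definition tens :: "'k \<Rightarrow> (nat \<Rightarrow> complex) \<Rightarrow> 'k epath list set \<Rightarrow> ('k idx \<Rightarrow> complex)" where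
  "tens a h s = (\<lambda>(c, n, P). if c = a \<and> P = s then h n else 0)"

definition pdom :: "('k \<Rightarrow> 'k \<Rightarrow> nat \<Rightarrow> nat) \<Rightarrow> 'k::order epath list \<Rightarrow> (nat \<Rightarrow> complex) set" where
  "pdom f p = {h \<in> ell2 UNIV. \<forall>s\<in>paths_to (seq_start p).
      l2norm (chi_seq f p (tens (seq_start p) h s)) = l2norm h}"

end

theory Submission
  imports Defs
begin

text \<open>
  Each elementary operator \<open>\<chi>\<^sub>s\<close> acts on the basis vectors \<open>e\<^sup>a\<^sub>n \<otimes> e\<^sub>P\<close> by a
  partial bijection of indices: the index \<open>n\<close> is moved along the injection \<open>\<gamma>\<close> (or back
  along its inverse) and the path \<open>P\<close> is multiplied by \<open>s\<close>.  Hence a composite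
  \<open>\<chi>\<^sub>p\<close> acts by a partial index map \<open>\<psi>\<close> together with the map on paths undoing left
  multiplication by \<open>p\<close>, and \<open>\<psi> m = n\<close> forces \<open>\<gamma>\<^sub>c\<^sub>a e\<^sub>n = \<gamma>\<^sub>c\<^sub>b e\<^sub>m\<close> for every common
  upper bound \<open>c\<close> of the endpoints.  For a loop at \<open>a\<close> this makes \<open>\<psi>\<close> a partial identity;
  and since in a directed set every sequence is equivalent to \<open>(b,c) * \<overline>(c,a)\<close> for any
  upper bound \<open>c\<close> of its endpoints, every loop is equivalent to the trivial path, so the
  path component acts trivially.  Thus \<open>\<chi>\<^sub>p\<close> only kills the coordinates \<open>(a,n,P)\<close> with
  \<open>n \<notin> D\<close> for some set \<open>D\<close>: it is \<open>Q \<otimes> I\<close> for the coordinate projection \<open>Q\<close> onto the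
  vectors supported in \<open>D\<close>, and these are exactly the vectors of the domain \<open>H\<^sub>p\<close>.
\<close>

fun linked :: "'k epath list \<Rightarrow> bool" where
  "linked (s # t # l) \<longleftrightarrow> ep_start s = ep_end t \<and> linked (t # l)"
| "linked _ \<longleftrightarrow> True"

lemma linked_iff_nth:
  "linked l \<longleftrightarrow> (\<forall>i. Suc i < length l \<longrightarrow> ep_start (l ! i) = ep_end (l ! Suc i))"
proof (induction l rule: linked.induct)
  case (1 s t l)
  show ?case
  proof
    assume "linked (s # t # l)"
    then show "\<forall>i. Suc i < length (s # t # l) \<longrightarrow>
        ep_start ((s # t # l) ! i) = ep_end ((s # t # l) ! Suc i)"
      using 1 by (auto simp: nth_Cons split: nat.splits)
  next
    assume H: "\<forall>i. Suc i < length (s # t # l) \<longrightarrow>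
        ep_start ((s # t # l) ! i) = ep_end ((s # t # l) ! Suc i)"
    have "ep_start s = ep_end t" using H[rule_format, of 0] by simp
    moreover have "linked (t # l)" using 1 H by (metis Suc_less_eq length_Cons nth_Cons_Suc)
    ultimately show "linked (s # t # l)" by simp
  qed
qed (auto simp: less_Suc_eq)

lemma wf_seq_iff_linked: "wf_seq l \<longleftrightarrow> l \<noteq> [] \<and> (\<forall>s\<in>set l. ep_valid s) \<and> linked l"
  unfolding wf_seq_def linked_iff_nth by simp

lemma wf_seq_singleton [simp]: "wf_seq [s] \<longleftrightarrow> ep_valid s"
  by (simp add: wf_seq_iff_linked)

lemma wf_seq_Cons_Cons [simp]:
  "wf_seq (s # t # l) \<longleftrightarrow> ep_valid s \<and> ep_start s = ep_end t \<and> wf_seq (t # l)"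
  by (auto simp: wf_seq_iff_linked)

lemma wf_seq_nonempty: "wf_seq l \<Longrightarrow> l \<noteq> []"
  by (simp add: wf_seq_iff_linked)

lemma seq_end_Cons [simp]: "seq_end (s # l) = ep_end s"
  by (simp add: seq_end_def)

lemma seq_end_append [simp]: "p \<noteq> [] \<Longrightarrow> seq_end (p @ q) = seq_end p"
  by (cases p) simp_all

lemma seq_start_singleton [simp]: "seq_start [s] = ep_start s"
  by (simp add: seq_start_def)

lemma seq_start_Cons_Cons [simp]: "seq_start (s # t # l) = seq_start (t # l)"
  by (simp add: seq_start_def)

lemma seq_start_append [simp]: "q \<noteq> [] \<Longrightarrow> seq_start (p @ q) = seq_start q"
  by (simp add: seq_start_def)

lemma seq_start_Cons: "l \<noteq> [] \<Longrightarrow> seq_start (s # l) = seq_start l"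
  by (cases l) simp_all

lemma wf_seq_Cons_iff: "wf_seq l \<Longrightarrow> wf_seq (s # l) \<longleftrightarrow> ep_valid s \<and> ep_start s = seq_end l"
  by (cases l) (auto simp: wf_seq_iff_linked)

lemma wf_seq_ConsD:
  "wf_seq (s # l) \<Longrightarrow> l \<noteq> [] \<Longrightarrow> wf_seq l \<and> ep_valid s \<and> ep_start s = seq_end l"
  by (cases l) auto

lemma wf_seq_append_iff:
  "p \<noteq> [] \<Longrightarrow> q \<noteq> [] \<Longrightarrow> wf_seq (p @ q) \<longleftrightarrow> wf_seq p \<and> wf_seq q \<and> seq_start p = seq_end q"
proof (induction p)
  case (Cons s p)
  then show ?case by (cases p; cases q) (auto simp: seq_start_def)
qed simp

section \<open>The path equivalence\<close>

lemma peq_wf_seq_ends: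
  "peq p q \<Longrightarrow> wf_seq p \<and> wf_seq q \<and> seq_end p = seq_end q \<and> seq_start p = seq_start q"
proof (induction rule: peq.induct)
  case (cong p p' q q')
  then have "p \<noteq> []" "q \<noteq> []" "p' \<noteq> []" "q' \<noteq> []" using wf_seq_nonempty by auto
  then show ?case using cong by simp
qed auto

declare peq.trans [trans]

lemma peq_in_context:
  assumes eq: "peq u u'" and wf: "wf_seq (x @ u @ y)"
  shows "peq (x @ u @ y) (x @ u' @ y)"
proof -
  have u: "wf_seq u" "wf_seq u'" "seq_end u = seq_end u'" "seq_start u = seq_start u'"
    "u \<noteq> []" "u' \<noteq> []"
    using peq_wf_seq_ends[OF eq] wf_seq_nonempty by auto
  have right: "peq (u @ y) (u' @ y)" if "wf_seq (u @ y)"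
  proof (cases "y = []")
    case False
    then have "wf_seq y" "wf_seq (u' @ y)" using that u wf_seq_append_iff by metis+
    then show ?thesis using peq.cong[OF eq peq.refl] that by blast
  qed (use eq in simp)
  show ?thesis
  proof (cases "x = []")
    case False
    have "wf_seq (u @ y)" "wf_seq x" "seq_start x = seq_end (u @ y)"
      using wf False u wf_seq_append_iff[of x "u @ y"] by auto
    moreover have "wf_seq (x @ u' @ y)"
      using calculation peq_wf_seq_ends[OF right] False u wf_seq_append_iff[of x "u' @ y"] by auto
    ultimately show ?thesis using peq.cong[OF peq.refl right] wf by simp
  qed (use right wf in simp)
qed

lemma peq_append_left: "peq u u' \<Longrightarrow> wf_seq (x @ u) \<Longrightarrow> peq (x @ u) (x @ u')"
  using peq_in_context[of u u' x "[]"] by simp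

lemma peq_append_right: "peq u u' \<Longrightarrow> wf_seq (u @ y) \<Longrightarrow> peq (u @ y) (u' @ y)"
  using peq_in_context[of u u' "[]" y] by simp

lemma peq_trivial_Cons:
  assumes "wf_seq p" "seq_end p = a"
  shows "peq (Dn a a # p) p"
proof -
  obtain s l where p: "p = s # l" using assms wf_seq_nonempty by (cases p) auto
  show ?thesis
  proof (cases s)
    case (Dn b c)
    then have "b = a" "a \<le> c" using assms p by (auto simp: wf_seq_iff_linked)
    then show ?thesis using peq_append_right[OF peq.dd[of a a c], of l] assms p Dn by simp
  next
    case (Up b c)
    then have "b = a" "c \<le> a" using assms p by (auto simp: wf_seq_iff_linked)
    have "peq (Dn a a # p) (Up a a # p)"
      using peq_append_right[OF peq.sym[OF peq.triv[of a]], of p] assms p Up \<open>b = a\<close> by simp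
    also have "peq \<dots> p"
      using peq_append_right[OF peq.uu[of c a a], of l] assms p Up \<open>b = a\<close> \<open>c \<le> a\<close> by simp
    finally show ?thesis .
  qed
qed

lemma peq_Up_Dn_cancel:
  assumes "a \<le> b" "wf_seq q" "seq_end q = b"
  shows "peq (Up b a # Dn a b # q) q"
proof -
  have "wf_seq (Dn a b # q)" using assms by (simp add: wf_seq_Cons_iff)
  then have "peq ([Up b a, Dn a b] @ q) ([Dn b b] @ q)"
    using peq_append_right[OF peq.ud[OF assms(1)]] assms by simp
  then show ?thesis using peq_trivial_Cons[OF assms(2,3)] peq.trans by simp
qed

lemma peq_Dn_Up_cancel:
  assumes "a \<le> b" "wf_seq q" "seq_end q = a"
  shows "peq (Dn a b # Up b a # q) q"
proof -
  have "wf_seq (Up b a # q)" using assms by (simp add: wf_seq_Cons_iff)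
  then have "peq ([Dn a b, Up b a] @ q) ([Dn a a] @ q)"
    using peq_append_right[OF peq.du[OF assms(1)]] assms by simp
  then show ?thesis using peq_trivial_Cons[OF assms(2,3)] peq.trans by simp
qed

lemma peq_via_upper_bound_mono:
  assumes "a \<le> c" "b \<le> c" "c \<le> d"
  shows "peq [Dn b c, Up c a] [Dn b d, Up d a]"
proof -
  have "b \<le> d" "a \<le> d" using assms order_trans by blast+
  note le = assms this
  have "peq [Dn b c, Up c a] [Dn b c, Dn c c, Up c a]"
    using peq_append_right[OF peq.sym[OF peq.dd[of b c c]], of "[Up c a]"] le by simp
  also have "peq \<dots> [Dn b c, Dn c d, Up d c, Up c a]"
    using peq_in_context[OF peq.sym[OF peq.du[of c d]], of "[Dn b c]" "[Up c a]"] le by simp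
  also have "peq \<dots> [Dn b c, Dn c d, Up d a]"
    using peq_append_left[OF peq.uu[of a c d], of "[Dn b c, Dn c d]"] le by simp
  also have "peq \<dots> [Dn b d, Up d a]"
    using peq_append_right[OF peq.dd[of b c d], of "[Up d a]"] le by simp
  finally show ?thesis .
qed

lemma peq_via_upper_bound:
  assumes dir: "upward_directed TYPE('k::order)"
    and "a \<le> c" "b \<le> c" "a \<le> d" "b \<le> (d::'k)"
  shows "peq [Dn b c, Up c a] [Dn b d, Up d a]"
proof -
  obtain e where "c \<le> e" "d \<le> e" using dir unfolding upward_directed_def by blast
  then show ?thesis using peq_via_upper_bound_mono[of a c b e] peq_via_upper_bound_mono[of a d b e]
      assms peq.sym peq.trans by meson
qed

lemma peq_singleton_via_upper_bound:
  assumes "ep_valid s" "ep_start s \<le> c" "ep_end s \<le> c"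
  shows "peq [s] [Dn (ep_end s) c, Up c (ep_start s)]"
proof (cases s)
  case (Dn b a)
  then have le: "b \<le> a" "a \<le> c" "b \<le> c" using assms by auto
  have "peq [Dn b a] [Dn b a, Dn a a]" using peq.sym[OF peq.dd[of b a a]] le by simp
  also have "peq \<dots> [Dn b a, Dn a c, Up c a]"
    using peq_append_left[OF peq.sym[OF peq.du[of a c]], of "[Dn b a]"] le by simp
  also have "peq \<dots> [Dn b c, Up c a]"
    using peq_append_right[OF peq.dd[of b a c], of "[Up c a]"] le by simp
  finally show ?thesis using Dn by simp
next
  case (Up b a)
  then have le: "a \<le> b" "a \<le> c" "b \<le> c" using assms by auto
  have "peq [Up b a] [Up b b, Up b a]" using peq.sym[OF peq.uu[of a b b]] le by simp
  also have "peq \<dots> [Dn b b, Up b a]"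
    using peq_append_right[OF peq.triv[of b], of "[Up b a]"] le by simp
  also have "peq \<dots> [Dn b c, Up c b, Up b a]"
    using peq_append_right[OF peq.sym[OF peq.du[of b c]], of "[Up b a]"] le by simp
  also have "peq \<dots> [Dn b c, Up c a]"
    using peq_append_left[OF peq.uu[of a b c], of "[Dn b c]"] le by simp
  finally show ?thesis using Up by simp
qed

lemma peq_Cons_via_upper_bound:
  assumes "ep_valid s" "ep_start s = e" "e \<le> d" "a \<le> d" "ep_end s \<le> d"
  shows "peq [s, Dn e d, Up d a] [Dn (ep_end s) d, Up d a]"
proof (cases s)
  case (Dn b e')
  then show ?thesis using peq_append_right[OF peq.dd[of b e d], of "[Up d a]"] assms by auto
next
  case (Up b e')
  then have le: "e' = e" "e \<le> b" "b \<le> d" using assms by auto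
  have "peq [Up b e, Dn e d, Up d a] [Up b e, Dn e b, Dn b d, Up d a]"
    using peq_in_context[OF peq.sym[OF peq.dd[of e b d]], of "[Up b e]" "[Up d a]"] le assms
    by simp
  also have "peq \<dots> [Dn b d, Up d a]"
    using peq_Up_Dn_cancel[of e b "[Dn b d, Up d a]"] le assms by simp
  finally show ?thesis using le Up by simp
qed

lemma wf_seq_peq_via_upper_bound:
  assumes dir: "upward_directed TYPE('k::order)"
  shows "wf_seq (l :: 'k epath list) \<Longrightarrow> seq_start l \<le> c \<Longrightarrow> seq_end l \<le> c
     \<Longrightarrow> peq l [Dn (seq_end l) c, Up c (seq_start l)]"
proof (induction l arbitrary: c)
  case (Cons s l)
  show ?case
  proof (cases "l = []")
    case True
    then show ?thesis using Cons.prems peq_singleton_via_upper_bound by simp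
  next
    case False
    define a e b where "a = seq_start l" and "e = seq_end l" and "b = ep_end s"
    have l: "wf_seq l" "ep_start s = e" "ep_valid s" "seq_start (s # l) = a"
      using wf_seq_ConsD[OF Cons.prems(1) False] False seq_start_Cons unfolding a_def e_def
      by auto
    obtain d where d: "c \<le> d" "e \<le> d" using dir unfolding upward_directed_def by blast
    have le: "a \<le> d" "a \<le> c" "b \<le> c" "b \<le> d"
      using Cons.prems l d unfolding b_def by (auto intro: order_trans)
    have "peq (s # l) ([s] @ [Dn e d, Up d a])"
      using peq_append_left[of _ _ "[s]", OF Cons.IH[OF l(1)]] Cons.prems le d
      unfolding a_def e_def by simp
    also have "peq \<dots> [Dn b d, Up d a]"
      using peq_Cons_via_upper_bound[OF l(3,2) d(2) le(1)] le unfolding b_def by simp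
    also have "peq \<dots> [Dn b c, Up c a]"
      using peq_via_upper_bound[OF dir] le by blast
    finally show ?thesis using l unfolding b_def by simp
  qed
qed (simp add: wf_seq_iff_linked)

lemma loop_peq_trivial:
  assumes "upward_directed TYPE('k::order)" and "is_loop (l::'k epath list) a"
  shows "peq l [Dn a a]"
proof -
  have "peq l [Dn a a, Up a a]"
    using wf_seq_peq_via_upper_bound[OF assms(1), of l a] assms(2) unfolding is_loop_def by auto
  then show ?thesis using peq.du[of a a] peq.trans by blast
qed

lemma mem_paths_to_iff: "P \<in> paths_to a \<longleftrightarrow> (\<exists>p. wf_seq p \<and> seq_end p = a \<and> P = pclass p)"
  unfolding paths_to_def by auto

lemma pclass_eq_iff: "wf_seq p \<Longrightarrow> pclass p = pclass q \<longleftrightarrow> peq p q"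
proof
  assume "wf_seq p" "pclass p = pclass q"
  then have "p \<in> pclass q" using peq.refl unfolding pclass_def by auto
  then show "peq p q" unfolding pclass_def by (simp add: peq.sym)
next
  assume "peq p q"
  then show "pclass p = pclass q"
    unfolding pclass_def by (blast intro: peq.trans peq.sym)
qed

lemma pext_pclass:
  assumes "wf_seq (s # q)" "wf_seq q"
  shows "pext s (pclass q) = pclass (s # q)"
proof -
  have Cons: "peq (s # q) (s # p)" if "peq q p" for p
    using peq_append_left[OF that, of "[s]"] assms by simp
  show ?thesis
    unfolding pext_def pclass_def
  proof (intro set_eqI iffI)
    fix r assume "r \<in> {r. \<exists>p\<in>{p. peq q p}. peq (s # p) r}"
    then obtain p where "peq q p" "peq (s # p) r" by auto
    then show "r \<in> {r. peq (s # q) r}" using Cons peq.trans by blast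
  next
    fix r assume "r \<in> {r. peq (s # q) r}"
    then show "r \<in> {r. \<exists>p\<in>{p. peq q p}. peq (s # p) r}" using peq.refl[OF assms(2)] by auto
  qed
qed

lemma pext_mem_paths_to:
  assumes "ep_valid s" "P \<in> paths_to (ep_start s)"
  shows "pext s P \<in> paths_to (ep_end s)"
proof -
  obtain p where p: "wf_seq p" "seq_end p = ep_start s" "P = pclass p"
    using assms(2) mem_paths_to_iff by blast
  then have "wf_seq (s # p)" using assms(1) by (simp add: wf_seq_Cons_iff)
  then show ?thesis using pext_pclass p mem_paths_to_iff by fastforce
qed

lemma pext_Up_eq_iff:
  assumes ab: "a \<le> b" and P: "P \<in> paths_to a" and Q: "Q \<in> paths_to b"
  shows "pext (Up b a) P = Q \<longleftrightarrow> P = pext (Dn a b) Q"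
proof -
  obtain p where p: "wf_seq p" "seq_end p = a" "P = pclass p" using P mem_paths_to_iff by blast
  obtain q where q: "wf_seq q" "seq_end q = b" "Q = pclass q" using Q mem_paths_to_iff by blast
  have wf: "wf_seq (Up b a # p)" "wf_seq (Dn a b # q)"
    "wf_seq (Dn a b # Up b a # p)" "wf_seq (Up b a # Dn a b # q)"
    using p q ab by (simp_all add: wf_seq_Cons_iff)
  have "pext (Up b a) P = Q \<longleftrightarrow> peq (Up b a # p) q"
    using pext_pclass[OF wf(1) p(1)] p q pclass_eq_iff[OF wf(1)] by simp
  also have "\<dots> \<longleftrightarrow> peq p (Dn a b # q)"
  proof
    assume "peq (Up b a # p) q"
    then have "peq (Dn a b # Up b a # p) (Dn a b # q)"
      using peq_append_left[of _ _ "[Dn a b]"] wf(3) by simp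
    then show "peq p (Dn a b # q)" using peq_Dn_Up_cancel[OF ab p(1,2)] peq.sym peq.trans by metis
  next
    assume "peq p (Dn a b # q)"
    then have "peq (Up b a # p) (Up b a # Dn a b # q)"
      using peq_append_left[of _ _ "[Up b a]"] wf(1) by simp
    then show "peq (Up b a # p) q" using peq_Up_Dn_cancel[OF ab q(1,2)] peq.trans by metis
  qed
  also have "\<dots> \<longleftrightarrow> P = pext (Dn a b) Q"
    using pext_pclass[OF wf(2) q(1)] p q pclass_eq_iff[OF p(1)] by simp
  finally show ?thesis .
qed

section \<open>The operators \<open>\<chi>\<close> as reindexings\<close>

definition reindexing :: "'k \<Rightarrow> 'k \<Rightarrow> (nat \<Rightarrow> nat option)
    \<Rightarrow> ('k epath list set \<Rightarrow> 'k epath list set)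
    \<Rightarrow> (('k::order idx \<Rightarrow> complex) \<Rightarrow> ('k idx \<Rightarrow> complex)) \<Rightarrow> bool" where
  "reindexing b a \<psi> R F \<longleftrightarrow> (\<forall>x. F x = (\<lambda>(c, m, Q). if c = b \<and> Q \<in> paths_to b then
      (case \<psi> m of None \<Rightarrow> 0 | Some n \<Rightarrow> x (a, n, R Q)) else 0))"

lemma reindexing_comp:
  assumes F2: "reindexing b e \<psi>2 R2 F2" and F1: "reindexing e a \<psi>1 R1 F1"
    and R2: "\<forall>Q\<in>paths_to b. R2 Q \<in> paths_to e"
  shows "reindexing b a (\<lambda>m. Option.bind (\<psi>2 m) \<psi>1) (R1 \<circ> R2) (F2 \<circ> F1)"
  unfolding reindexing_def
proof (intro allI ext, clarify)
  fix x c m Q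
  show "(F2 \<circ> F1) x (c, m, Q) = (if c = b \<and> Q \<in> paths_to b then
      (case Option.bind (\<psi>2 m) \<psi>1 of None \<Rightarrow> 0 | Some n \<Rightarrow> x (a, n, (R1 \<circ> R2) Q)) else 0)"
    using F1 F2 R2 unfolding reindexing_def by (auto split: option.split)
qed

lemma reindexing_chi_up_adj:
  "reindexing b a (\<lambda>n. Some (f a b n)) (pext (Up a b)) (chi_up_adj f a b)"
  unfolding reindexing_def chi_up_adj_def by (simp add: fun_eq_iff)

lemma chi_up_fiber:
  assumes ab: "a \<le> b" and inj: "inj (f b a)"
  shows "{(n, P). P \<in> paths_to a \<and> f b a n = m \<and> pext (Up b a) P = Q} =
    (if Q \<in> paths_to b \<and> m \<in> range (f b a) then {(inv (f b a) m, pext (Dn a b) Q)} else {})"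
proof (cases "Q \<in> paths_to b \<and> m \<in> range (f b a)")
  case True
  then obtain n0 where Q: "Q \<in> paths_to b" and m: "m = f b a n0" by auto
  have "pext (Dn a b) Q \<in> paths_to a" using pext_mem_paths_to[of "Dn a b"] ab Q by simp
  then show ?thesis using True pext_Up_eq_iff[OF ab _ Q] inj m by (auto simp: inj_eq)
next
  case False
  then show ?thesis using pext_mem_paths_to[of "Up b a"] ab by auto
qed

lemma reindexing_chi_up:
  assumes "a \<le> b" and "inj (f b a)"
  shows "reindexing b a (\<lambda>m. if m \<in> range (f b a) then Some (inv (f b a) m) else None)
     (pext (Dn a b)) (chi_up f b a)"
  unfolding reindexing_def chi_up_def chi_up_fiber[of a b f, OF assms] by (auto simp: fun_eq_iff)

text \<open>The intended reading of \<open>\<psi> m = Some n\<close> is \<open>\<gamma>\<^sub>c\<^sub>a e\<^sub>n = \<gamma>\<^sub>c\<^sub>b e\<^sub>m\<close>.\<close>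

definition compatible_index_map :: "('k \<Rightarrow> 'k \<Rightarrow> nat \<Rightarrow> nat) \<Rightarrow> 'k::order \<Rightarrow> 'k
    \<Rightarrow> (nat \<Rightarrow> nat option) \<Rightarrow> bool" where
  "compatible_index_map f b a \<psi> \<longleftrightarrow>
     (\<forall>m n c. \<psi> m = Some n \<longrightarrow> a \<le> c \<longrightarrow> b \<le> c \<longrightarrow> f c a n = f c b m)"

definition undoes_left_mult :: "'k::order epath list
    \<Rightarrow> ('k epath list set \<Rightarrow> 'k epath list set) \<Rightarrow> bool" where
  "undoes_left_mult l R \<longleftrightarrow> (\<forall>q. wf_seq q \<and> seq_end q = seq_end l \<longrightarrow>
     (\<exists>q'. wf_seq q' \<and> seq_end q' = seq_start l \<and> R (pclass q) = pclass q' \<and> peq (l @ q') q))"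

definition chi_seq_reindexing :: "('k \<Rightarrow> 'k \<Rightarrow> nat \<Rightarrow> nat) \<Rightarrow> 'k::order epath list
    \<Rightarrow> (nat \<Rightarrow> nat option) \<Rightarrow> ('k epath list set \<Rightarrow> 'k epath list set) \<Rightarrow> bool" where
  "chi_seq_reindexing f l \<psi> R \<longleftrightarrow>
     reindexing (seq_end l) (seq_start l) \<psi> R (chi_seq f l) \<and>
     compatible_index_map f (seq_end l) (seq_start l) \<psi> \<and> undoes_left_mult l R"

lemma compatible_index_map_bind:
  assumes f_inj: "\<And>a b. a \<le> b \<Longrightarrow> inj (f b a)"
    and f_comp: "\<And>a b c. a \<le> b \<Longrightarrow> b \<le> c \<Longrightarrow> f c a = f c b \<circ> f b a"
    and dir: "upward_directed TYPE('k::order)"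
    and \<psi>1: "compatible_index_map f b e \<psi>1" and \<psi>2: "compatible_index_map f e (a::'k) \<psi>2"
  shows "compatible_index_map f b a (\<lambda>m. Option.bind (\<psi>1 m) \<psi>2)"
  unfolding compatible_index_map_def
proof (intro allI impI)
  fix m n c assume H: "Option.bind (\<psi>1 m) \<psi>2 = Some n" "a \<le> c" "b \<le> c"
  then obtain k where k: "\<psi>1 m = Some k" "\<psi>2 k = Some n" by (cases "\<psi>1 m") auto
  txt \<open>The intermediate point \<open>e\<close> need not lie below \<open>c\<close>: pass to an upper bound \<open>d\<close>
    of both and cancel the injection \<open>f d c\<close>.\<close>
  obtain d where d: "c \<le> d" "e \<le> d" using dir unfolding upward_directed_def by blast
  have "a \<le> d" "b \<le> d" using H d order_trans by blast+
  then have "f d a n = f d b m"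
    using \<psi>1 \<psi>2 k d unfolding compatible_index_map_def by metis
  then have "f d c (f c a n) = f d c (f c b m)"
    using f_comp[OF H(2) d(1)] f_comp[OF H(3) d(1)] by simp
  then show "f c a n = f c b m" using f_inj[OF d(1)] by (simp add: inj_eq)
qed

lemma undoes_left_mult_mem_paths_to:
  "undoes_left_mult l R \<Longrightarrow> Q \<in> paths_to (seq_end l) \<Longrightarrow> R Q \<in> paths_to (seq_start l)"
  unfolding undoes_left_mult_def mem_paths_to_iff by blast

lemma undoes_left_mult_Cons:
  assumes R1: "undoes_left_mult [s] R1" and R2: "undoes_left_mult l R2"
    and wf: "wf_seq (s # l)" and l: "l \<noteq> []"
  shows "undoes_left_mult (s # l) (R2 \<circ> R1)"
  unfolding undoes_left_mult_def
proof (intro allI impI)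
  fix q assume q: "wf_seq q \<and> seq_end q = seq_end (s # l)"
  have ends: "seq_start [s] = seq_end l" "seq_start (s # l) = seq_start l"
    using wf_seq_ConsD[OF wf l] l by (simp_all add: seq_start_Cons)
  obtain q1 where q1: "wf_seq q1" "seq_end q1 = seq_end l" "R1 (pclass q) = pclass q1"
      "peq ([s] @ q1) q"
    using R1 q ends unfolding undoes_left_mult_def by auto
  obtain q2 where q2: "wf_seq q2" "seq_end q2 = seq_start l" "R2 (pclass q1) = pclass q2"
      "peq (l @ q2) q1"
    using R2 q1 unfolding undoes_left_mult_def by blast
  have "wf_seq ([s] @ l @ q2)"
    using wf_seq_ConsD[OF wf l] l peq_wf_seq_ends[OF q2(4)] by (simp add: wf_seq_Cons_iff)
  then have "peq ([s] @ l @ q2) ([s] @ q1)" using peq_append_left[OF q2(4)] by blast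
  then have "peq ((s # l) @ q2) q" using q1(4) peq.trans by simp
  then show "\<exists>q'. wf_seq q' \<and> seq_end q' = seq_start (s # l) \<and>
      (R2 \<circ> R1) (pclass q) = pclass q' \<and> peq ((s # l) @ q') q"
    using q1 q2 ends by auto
qed

lemma chi_seq_Cons: "chi_seq f (s # l) = chi_elem f s \<circ> chi_seq f l"
  by (simp add: chi_seq_def)

lemma chi_seq_singleton: "chi_seq f [s] = chi_elem f s"
  by (simp add: chi_seq_def)

lemma chi_seq_reindexing_Dn:
  assumes ba: "b \<le> a"
    and f_comp: "\<And>a b c. a \<le> b \<Longrightarrow> b \<le> c \<Longrightarrow> f c a = f c b \<circ> f b a"
  shows "chi_seq_reindexing f [Dn b a] (\<lambda>n. Some (f a b n)) (pext (Up a b))"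
proof -
  have "compatible_index_map f b a (\<lambda>n. Some (f a b n))"
    unfolding compatible_index_map_def
  proof (intro allI impI)
    fix m n c assume "Some (f a b m) = Some n" "a \<le> c" "b \<le> c"
    then show "f c a n = f c b m" using f_comp[OF ba, of c] by simp
  qed
  moreover have "undoes_left_mult [Dn b a] (pext (Up a b))"
    unfolding undoes_left_mult_def
  proof (intro allI impI)
    fix q assume q: "wf_seq q \<and> seq_end q = seq_end [Dn b a]"
    then have wf: "wf_seq (Up a b # q)" using ba by (simp add: wf_seq_Cons_iff)
    show "\<exists>q'. wf_seq q' \<and> seq_end q' = seq_start [Dn b a] \<and>
        pext (Up a b) (pclass q) = pclass q' \<and> peq ([Dn b a] @ q') q"
      using wf q pext_pclass[OF wf] peq_Dn_Up_cancel[OF ba, of q] by auto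
  qed
  ultimately show ?thesis
    using reindexing_chi_up_adj[of b a f]
    unfolding chi_seq_reindexing_def by (simp add: chi_seq_singleton)
qed

lemma chi_seq_reindexing_Up:
  assumes ab: "a \<le> b" and inj: "inj (f b a)"
    and f_comp: "\<And>a b c. a \<le> b \<Longrightarrow> b \<le> c \<Longrightarrow> f c a = f c b \<circ> f b a"
  shows "chi_seq_reindexing f [Up b a]
    (\<lambda>m. if m \<in> range (f b a) then Some (inv (f b a) m) else None) (pext (Dn a b))"
proof -
  have "compatible_index_map f b a (\<lambda>m. if m \<in> range (f b a) then Some (inv (f b a) m) else None)"
    unfolding compatible_index_map_def
  proof (intro allI impI)
    fix m n c assume "(if m \<in> range (f b a) then Some (inv (f b a) m) else None) = Some n"
      "a \<le> c" "b \<le> c"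
    moreover from this have "f b a n = m" by (auto simp: f_inv_into_f split: if_splits)
    ultimately show "f c a n = f c b m" using f_comp[OF ab, of c] by auto
  qed
  moreover have "undoes_left_mult [Up b a] (pext (Dn a b))"
    unfolding undoes_left_mult_def
  proof (intro allI impI)
    fix q assume q: "wf_seq q \<and> seq_end q = seq_end [Up b a]"
    then have wf: "wf_seq (Dn a b # q)" using ab by (simp add: wf_seq_Cons_iff)
    show "\<exists>q'. wf_seq q' \<and> seq_end q' = seq_start [Up b a] \<and>
        pext (Dn a b) (pclass q) = pclass q' \<and> peq ([Up b a] @ q') q"
      using wf q pext_pclass[OF wf] peq_Up_Dn_cancel[OF ab, of q] by auto
  qed
  ultimately show ?thesis
    using reindexing_chi_up[of a b f, OF ab inj]
    unfolding chi_seq_reindexing_def by (simp add: chi_seq_singleton)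
qed

lemma chi_seq_reindexing_Cons:
  assumes f_inj: "\<And>a b. a \<le> b \<Longrightarrow> inj (f b a)"
    and f_comp: "\<And>a b c. a \<le> b \<Longrightarrow> b \<le> c \<Longrightarrow> f c a = f c b \<circ> f b a"
    and dir: "upward_directed TYPE('k::order)"
    and s: "chi_seq_reindexing f [s] \<psi>1 R1" and l: "chi_seq_reindexing f l \<psi>2 R2"
    and wf: "wf_seq (s # (l::'k epath list))" and ne: "l \<noteq> []"
  shows "chi_seq_reindexing f (s # l) (\<lambda>m. Option.bind (\<psi>1 m) \<psi>2) (R2 \<circ> R1)"
proof -
  have ends: "seq_start [s] = seq_end l" "seq_start (s # l) = seq_start l"
      "seq_end (s # l) = seq_end [s]"
    using wf_seq_ConsD[OF wf ne] ne by (simp_all add: seq_start_Cons)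
  have s': "reindexing (seq_end [s]) (seq_end l) \<psi>1 R1 (chi_elem f s)"
      "compatible_index_map f (seq_end [s]) (seq_end l) \<psi>1" "undoes_left_mult [s] R1"
    using s ends(1) unfolding chi_seq_reindexing_def chi_seq_singleton by auto
  have l': "reindexing (seq_end l) (seq_start l) \<psi>2 R2 (chi_seq f l)"
      "compatible_index_map f (seq_end l) (seq_start l) \<psi>2" "undoes_left_mult l R2"
    using l unfolding chi_seq_reindexing_def by auto
  have "\<forall>Q\<in>paths_to (seq_end [s]). R1 Q \<in> paths_to (seq_end l)"
    using undoes_left_mult_mem_paths_to[OF s'(3)] ends(1) by simp
  then have "reindexing (seq_end [s]) (seq_start l) (\<lambda>m. Option.bind (\<psi>1 m) \<psi>2) (R2 \<circ> R1)
      (chi_elem f s \<circ> chi_seq f l)"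
    by (rule reindexing_comp[OF s'(1) l'(1)])
  moreover have "compatible_index_map f (seq_end [s]) (seq_start l) (\<lambda>m. Option.bind (\<psi>1 m) \<psi>2)"
    by (rule compatible_index_map_bind[of f, OF f_inj f_comp dir s'(2) l'(2)])
  moreover have "undoes_left_mult (s # l) (R2 \<circ> R1)"
    by (rule undoes_left_mult_Cons[OF s'(3) l'(3) wf ne])
  ultimately show ?thesis using ends unfolding chi_seq_reindexing_def chi_seq_Cons by simp
qed

lemma chi_seq_reindexing_exists:
  assumes f_inj: "\<And>a b. a \<le> b \<Longrightarrow> inj (f b a)"
    and f_comp: "\<And>a b c. a \<le> b \<Longrightarrow> b \<le> c \<Longrightarrow> f c a = f c b \<circ> f b a"
    and dir: "upward_directed TYPE('k::order)"
  shows "wf_seq (l::'k epath list) \<Longrightarrow> \<exists>\<psi> R. chi_seq_reindexing f l \<psi> R"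
proof (induction l)
  case (Cons s l)
  have "ep_valid s" using Cons.prems by (simp add: wf_seq_iff_linked)
  then have "\<exists>\<psi> R. chi_seq_reindexing f [s] \<psi> R"
  proof (cases s)
    case (Dn b a)
    then have "b \<le> a" using \<open>ep_valid s\<close> by simp
    show ?thesis using chi_seq_reindexing_Dn[of b a f, OF \<open>b \<le> a\<close> f_comp] unfolding Dn by blast
  next
    case (Up b a)
    then have "a \<le> b" using \<open>ep_valid s\<close> by simp
    show ?thesis
      using chi_seq_reindexing_Up[of a b f, OF \<open>a \<le> b\<close> f_inj[OF \<open>a \<le> b\<close>] f_comp]
      unfolding Up by blast
  qed
  then obtain \<psi>1 R1 where s: "chi_seq_reindexing f [s] \<psi>1 R1" by blast
  show ?case
  proof (cases "l = []")
    case False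
    then obtain \<psi>2 R2 where "chi_seq_reindexing f l \<psi>2 R2"
      using Cons wf_seq_ConsD by blast
    then show ?thesis
      using chi_seq_reindexing_Cons[of f, OF f_inj f_comp dir s _ Cons.prems False] by blast
  qed (use s in blast)
qed (simp add: wf_seq_iff_linked)

section \<open>Coordinate projections in \<open>\<ell>\<^sup>2\<close>\<close>

definition coord_proj :: "'i set \<Rightarrow> ('i \<Rightarrow> complex) \<Rightarrow> ('i \<Rightarrow> complex)" where
  "coord_proj J x = (\<lambda>i. if i \<in> J then x i else 0)"

lemma ell2_comparison:
  assumes "x \<in> ell2 I" "\<And>i. cmod (y i) \<le> cmod (x i)" "\<And>i. i \<notin> I \<Longrightarrow> y i = 0"
  shows "y \<in> ell2 I"
proof -
  have "(\<lambda>i. (cmod (x i))\<^sup>2) summable_on UNIV" using assms(1) unfolding ell2_def by blast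
  then have "(\<lambda>i. (cmod (y i))\<^sup>2) summable_on UNIV"
    by (rule summable_on_comparison_test) (use assms(2) in \<open>auto intro: power_mono\<close>)
  then show ?thesis using assms(3) unfolding ell2_def by blast
qed

lemma ell2_coord_proj: "x \<in> ell2 I \<Longrightarrow> coord_proj J x \<in> ell2 I"
  by (rule ell2_comparison) (auto simp: coord_proj_def ell2_def)

lemma ell2_add:
  assumes "x \<in> ell2 I" "y \<in> ell2 I"
  shows "(\<lambda>i. x i + y i) \<in> ell2 I"
proof -
  have "(\<lambda>i. 2 * (cmod (x i))\<^sup>2 + 2 * (cmod (y i))\<^sup>2) summable_on UNIV"
    using assms unfolding ell2_def by (intro summable_on_add summable_on_cmult_right) auto
  then have "(\<lambda>i. (cmod (x i + y i))\<^sup>2) summable_on UNIV"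
  proof (rule summable_on_comparison_test)
    fix i
    have "(cmod (x i + y i))\<^sup>2 \<le> (cmod (x i) + cmod (y i))\<^sup>2"
      by (simp add: power_mono norm_triangle_ineq)
    also have "\<dots> \<le> 2 * (cmod (x i))\<^sup>2 + 2 * (cmod (y i))\<^sup>2"
      using zero_le_power2[of "cmod (x i) - cmod (y i)"] unfolding power2_sum power2_diff
      by linarith
    finally show "(cmod (x i + y i))\<^sup>2 \<le> 2 * (cmod (x i))\<^sup>2 + 2 * (cmod (y i))\<^sup>2" .
  qed simp
  then show ?thesis using assms unfolding ell2_def by auto
qed

lemma ell2_scale:
  assumes "x \<in> ell2 I"
  shows "(\<lambda>i. c * x i) \<in> ell2 I"
proof -
  have "(\<lambda>i. (cmod c)\<^sup>2 * (cmod (x i))\<^sup>2) summable_on UNIV"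
    using assms unfolding ell2_def by (intro summable_on_cmult_right) auto
  then show ?thesis using assms unfolding ell2_def by (auto simp: norm_mult power_mult_distrib)
qed

lemma is_orth_proj_coord_proj:
  "is_orth_proj (ell2 I) {x \<in> ell2 I. \<forall>i. i \<notin> J \<longrightarrow> x i = 0} (coord_proj J)"
  unfolding is_orth_proj_def lin_subspace_def
proof (intro conjI ballI allI)
  fix x v assume "v \<in> {x \<in> ell2 I. \<forall>i. i \<notin> J \<longrightarrow> x i = 0}"
  then have "(\<lambda>i. cnj (v i) * (x i - coord_proj J x i)) = (\<lambda>i. 0)"
    by (auto simp: coord_proj_def fun_eq_iff)
  then show "l2inner v (\<lambda>i. x i - coord_proj J x i) = 0" unfolding l2inner_def by simp
qed (auto simp: ell2_add ell2_scale ell2_coord_proj, auto simp: ell2_def coord_proj_def)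

lemma l2norm_tens: "l2norm (tens a h s) = l2norm h"
proof -
  have "(\<Sum>\<^sub>\<infinity>i. (cmod (tens a h s i))\<^sup>2) = (\<Sum>\<^sub>\<infinity>i\<in>range (\<lambda>n. (a, n, s)). (cmod (tens a h s i))\<^sup>2)"
    by (rule infsum_cong_neutral) (auto simp: tens_def)
  also have "\<dots> = (\<Sum>\<^sub>\<infinity>n. (cmod (h n))\<^sup>2)"
    by (subst infsum_reindex) (auto simp: inj_on_def tens_def o_def)
  finally show ?thesis unfolding l2norm_def by simp
qed

lemma l2norm_coord_proj_eq_iff:
  assumes h: "h \<in> ell2 UNIV"
  shows "l2norm (coord_proj D h) = l2norm h \<longleftrightarrow> (\<forall>n. n \<notin> D \<longrightarrow> h n = 0)"
proof
  assume "\<forall>n. n \<notin> D \<longrightarrow> h n = 0"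
  then have "coord_proj D h = h" by (auto simp: coord_proj_def)
  then show "l2norm (coord_proj D h) = l2norm h" by simp
next
  assume eq: "l2norm (coord_proj D h) = l2norm h"
  show "\<forall>n. n \<notin> D \<longrightarrow> h n = 0"
  proof (rule ccontr)
    assume "\<not> (\<forall>n. n \<notin> D \<longrightarrow> h n = 0)"
    then obtain n0 where n0: "n0 \<notin> D" "h n0 \<noteq> 0" by blast
    have "(\<Sum>\<^sub>\<infinity>i. (cmod (coord_proj D h i))\<^sup>2) < (\<Sum>\<^sub>\<infinity>i. (cmod (h i))\<^sup>2)"
    proof (rule has_sum_strict_mono[OF has_sum_infsum has_sum_infsum])
      show "(\<lambda>i. (cmod (h i))\<^sup>2) summable_on UNIV" using h unfolding ell2_def by blast
      show "(\<lambda>i. (cmod (coord_proj D h i))\<^sup>2) summable_on UNIV"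
        using ell2_coord_proj[OF h] unfolding ell2_def by blast
      show "(cmod (coord_proj D h i))\<^sup>2 \<le> (cmod (h i))\<^sup>2" for i by (simp add: coord_proj_def)
      show "(cmod (coord_proj D h n0))\<^sup>2 < (cmod (h n0))\<^sup>2" using n0 by (simp add: coord_proj_def)
    qed simp
    then show False using eq unfolding l2norm_def by simp
  qed
qed

lemma chi_seq_loop_eq_coord_proj:
  fixes f :: "'k::order \<Rightarrow> 'k \<Rightarrow> nat \<Rightarrow> nat"
  assumes f_inj: "\<And>a b. a \<le> b \<Longrightarrow> inj (f b a)"
    and f_id: "\<And>a. f a a = id"
    and f_comp: "\<And>a b c. a \<le> b \<Longrightarrow> b \<le> c \<Longrightarrow> f c a = f c b \<circ> f b a"
    and dir: "upward_directed TYPE('k)"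
    and loop: "is_loop p a"
  shows "\<exists>D. chi_seq f p = coord_proj {(c, m, P). c = a \<and> P \<in> paths_to a \<and> m \<in> D}"
proof -
  have wf: "wf_seq p" and ends: "seq_end p = a" "seq_start p = a"
    using loop unfolding is_loop_def by auto
  obtain \<psi> R where reindex: "reindexing a a \<psi> R (chi_seq f p)"
    and compat: "compatible_index_map f a a \<psi>" and undo: "undoes_left_mult p R"
    using chi_seq_reindexing_exists[of f, OF f_inj f_comp dir wf] ends
    unfolding chi_seq_reindexing_def by auto
  have \<psi>_id: "n = m" if "\<psi> m = Some n" for m n
    using compat that f_id unfolding compatible_index_map_def by fastforce
  have R_id: "R Q = Q" if Q: "Q \<in> paths_to a" for Q
  proof -
    obtain q where q: "wf_seq q" "seq_end q = a" "Q = pclass q"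
      using Q unfolding mem_paths_to_iff by blast
    then obtain q' where q': "wf_seq q'" "seq_end q' = a" "R Q = pclass q'" "peq (p @ q') q"
      using undo[unfolded undoes_left_mult_def, rule_format, of q] ends by auto
    have "peq q' ([Dn a a] @ q')" using peq.sym[OF peq_trivial_Cons[OF q'(1,2)]] by simp
    also have "peq \<dots> (p @ q')"
      using peq_append_right[OF peq.sym[OF loop_peq_trivial[OF dir loop]], of q'] q'(1,2)
      by (simp add: wf_seq_Cons_iff)
    also have "peq \<dots> q" by (rule q'(4))
    finally show ?thesis using q q'(3) pclass_eq_iff[OF q'(1)] by simp
  qed
  have "chi_seq f p = coord_proj {(c, m, P). c = a \<and> P \<in> paths_to a \<and> m \<in> {m. \<psi> m \<noteq> None}}"
    using reindex R_id
    by (auto simp: reindexing_def coord_proj_def fun_eq_iff split: option.split dest: \<psi>_id)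
  then show ?thesis by blast
qed

lemma pdom_eq_supported:
  assumes chi: "chi_seq f p = coord_proj {(c, m, P). c = a \<and> P \<in> paths_to a \<and> m \<in> D}"
    and start: "seq_start p = a"
  shows "pdom f p = {h \<in> ell2 UNIV. \<forall>n. n \<notin> D \<longrightarrow> h n = 0}"
proof -
  have tens: "chi_seq f p (tens a h s) = tens a (coord_proj D h) s" if "s \<in> paths_to a" for h s
    unfolding chi using that by (auto simp: fun_eq_iff coord_proj_def tens_def)
  have "pclass [Dn a a] \<in> paths_to a" unfolding mem_paths_to_iff by force
  then show ?thesis
    unfolding pdom_def start using tens l2norm_coord_proj_eq_iff by (auto simp: l2norm_tens)
qed

theorem theorem3p8:
  fixes f :: "'k::order \<Rightarrow> 'k \<Rightarrow> nat \<Rightarrow> nat"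
    and a :: 'k and p :: "'k epath list"
  assumes f_inj: "\<And>a b. a \<le> b \<Longrightarrow> inj (f b a)"
    and f_id: "\<And>a. f a a = id"
    and f_comp: "\<And>a b c. a \<le> b \<Longrightarrow> b \<le> c \<Longrightarrow> f c a = f c b \<circ> f b a"
    and directed: "upward_directed TYPE('k)"
    and loop: "is_loop p a"
  shows "(\<exists>V. is_orth_proj HH V (chi_seq f p)) \<and>
    (\<exists>Q. is_orth_proj (ell2 UNIV) (pdom f p) Q \<and>
       (\<forall>x\<in>HH. chi_seq f p x =
          (\<lambda>(c, n, P). if c = a \<and> P \<in> paths_to a then Q (\<lambda>m. x (a, m, P)) n else 0)))"
proof -
  obtain D where chi: "chi_seq f p = coord_proj {(c, m, P). c = a \<and> P \<in> paths_to a \<and> m \<in> D}"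
    using chi_seq_loop_eq_coord_proj[of f, OF f_inj f_id f_comp directed loop] by blast
  have "\<exists>V. is_orth_proj HH V (chi_seq f p)"
    unfolding HH_def chi using is_orth_proj_coord_proj by blast
  moreover have "is_orth_proj (ell2 UNIV) (pdom f p) (coord_proj D)"
    using pdom_eq_supported[OF chi] is_orth_proj_coord_proj loop
    unfolding is_loop_def by auto
  moreover have "\<forall>x\<in>HH. chi_seq f p x =
      (\<lambda>(c, n, P). if c = a \<and> P \<in> paths_to a then coord_proj D (\<lambda>m. x (a, m, P)) n else 0)"
    unfolding chi by (auto simp: fun_eq_iff coord_proj_def)
  ultimately show ?thesis by blast
qed

end
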